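(* Let $d\geq 1$, $0<a<b<\infty$, and let $(\mu_k^+)$, $(\mu_k^-)$ be as follows: $(\mu_k^+)_{k\in\mathbb{N}}$ distinct positive reals with $\mu_k^+\to+\infty$ and $\sum_k 1/\mu_k^+=\infty$; $(\mu_k^-)_{k\in\mathbb{N}}$ distinct negative reals with $\mu_k^-\to-\infty$ and $\sum_k 1/|\mu_k^-|=\infty$. Let $(\mu_k)_{k\in\mathbb{N}}$ be an enumeration of $\{\mu_k^+\}\cup\{\mu_k^-\}$. For each $K\in\mathbb{N}$ let $\mathcal{H}_K$ be the set of functions on $A_{a,b}$ of the form $\mathbf{x}\mapsto\sum_{k=1}^K a_k\|\mathbf{x}\|^{\mu_k}+b_0$ with $a_1,\dots,a_K,b_0\in\mathbb{R}$. Then $\bigcup_{K\in\mathbb{N}}\mathcal{H}_K$ is dense in $L^2_{\mathrm{rad}}(A_{a,b})$.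
   Context: $A_{a,b}=\{\mathbf{x}\in\mathbb{R}^d: a\leq\|\mathbf{x}\|\leq b\}$ (Euclidean norm). $L^2_{\mathrm{rad}}(A_{a,b})=\{f\in L^2(A_{a,b}): f(\mathbf{x})=h(\|\mathbf{x}\|)\text{ for a.e. }\mathbf{x}\text{, for some function }h\}$ is the closed subspace of radial functions in $L^2(A_{a,b})$, with the $L^2$ norm. *)

theory Defs
  imports "HOL-Analysis.Analysis"
begin

definition annulus :: "real \<Rightarrow> real \<Rightarrow> 'a::euclidean_space set" where
  "annulus a b = {x. a \<le> norm x \<and> norm x \<le> b}"

text \<open>Real-valued L^2 functions on a set S (Lebesgue measure), as representatives.\<close>
definition L2_on :: "'a::euclidean_space set \<Rightarrow> ('a \<Rightarrow> real) set" where
  "L2_on S = {f. f \<in> borel_measurable (lebesgue_on S) \<and>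
                  integrable (lebesgue_on S) (\<lambda>x. (f x)\<^sup>2)}"

definition L2_rad :: "'a::euclidean_space set \<Rightarrow> ('a \<Rightarrow> real) set" where
  "L2_rad S = {f \<in> L2_on S. \<exists>h :: real \<Rightarrow> real. AE x in lebesgue_on S. f x = h (norm x)}"

definition L2_dist :: "'a::euclidean_space set \<Rightarrow> ('a \<Rightarrow> real) \<Rightarrow> ('a \<Rightarrow> real) \<Rightarrow> real" where
  "L2_dist S f g = sqrt (integral\<^sup>L (lebesgue_on S) (\<lambda>x. (f x - g x)\<^sup>2))"

text \<open>H_K: functions x \<mapsto> \<Sum>_{k<K} c_k |x|^{\<mu>_k} + b0 (indices start at 0).\<close>
definition H :: "(nat \<Rightarrow> real) \<Rightarrow> nat \<Rightarrow> ('a::euclidean_space \<Rightarrow> real) set" where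
  "H \<mu> K = {g. \<exists>c :: nat \<Rightarrow> real. \<exists>b0 :: real.
               g = (\<lambda>x. (\<Sum>k<K. c k * norm x powr \<mu> k) + b0)}"

end

theory Submission
  imports Defs
begin

(* If |x^m - P(x)| <= e on (0,1] for a combination P of powers x^(L j), one more
   exponent l > m brings the error down to (1 - m/l) e: divide the error by x^l,
   differentiate (which removes the new power), and integrate back from 1.  Iterating
   gives the bound prod_j (1 - m / L j) <= exp (- m * sum_j 1 / L j), which tends to 0
   when sum_j 1 / L j diverges.  So every power of r = norm x, hence by Weierstrass every
   continuous function of r, is a uniform limit on [a, b] of constants plus combinations
   of r powr mu_k; on the finite-measure annulus uniform limits are L2 limits.  Finally a
   radial L2 function is an L2 limit of continuous functions of r: quantise its values,
   and approximate the indicator of each (radial) level set via Urysohn's lemma on the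
   line of radii. *)

section \<open>Muntz approximation of a single power\<close>

lemma abs_le_of_derivative_bound:
  fixes R V R' V' :: "real \<Rightarrow> real"
  assumes "x \<le> y"
    and R: "\<And>t. x \<le> t \<Longrightarrow> t \<le> y \<Longrightarrow> (R has_real_derivative R' t) (at t)"
    and V: "\<And>t. x \<le> t \<Longrightarrow> t \<le> y \<Longrightarrow> (V has_real_derivative V' t) (at t)"
    and bound: "\<And>t. x \<le> t \<Longrightarrow> t \<le> y \<Longrightarrow> \<bar>R' t\<bar> \<le> - V' t"
    and "R y = 0" "V y = 0"
  shows "\<bar>R x\<bar> \<le> V x"
proof -
  have "V y - R y \<le> V x - R x"
    by (rule DERIV_nonpos_imp_nonincreasing[OF \<open>x \<le> y\<close>])
      (use R V bound in \<open>fastforce intro: DERIV_diff\<close>)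
  moreover have "V y + R y \<le> V x + R x"
    by (rule DERIV_nonpos_imp_nonincreasing[OF \<open>x \<le> y\<close>])
      (use R V bound in \<open>fastforce intro: DERIV_add\<close>)
  ultimately show ?thesis using assms(5,6) by linarith
qed

lemma muntz_remainder_derivative:
  fixes A C L :: "nat \<Rightarrow> real"
  assumes "0 < t" and C: "\<And>j. j < n \<Longrightarrow> C j * (l - L j) = A j * (l - m)"
  shows "((\<lambda>t. t powr (m - l) - (\<Sum>j<n. C j * t powr (L j - l))) has_real_derivative
           - ((l - m) * t powr (- l - 1)) * (t powr m - (\<Sum>j<n. A j * t powr L j))) (at t)"
proof -
  define w where "w = (l - m) * t powr (- l - 1)"
  have "C j * ((L j - l) * t powr (L j - l - 1)) = - w * (A j * t powr L j)" if "j < n" for j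
  proof -
    have "C j * ((L j - l) * t powr (L j - l - 1))
        = - (C j * (l - L j)) * (t powr (- l - 1) * t powr L j)"
      using \<open>0 < t\<close> by (simp add: powr_add[symmetric] algebra_simps)
    then show ?thesis unfolding C[OF that] w_def by (simp add: algebra_simps)
  qed
  then have sum: "(\<Sum>j<n. C j * ((L j - l) * t powr (L j - l - 1))) = - w * (\<Sum>j<n. A j * t powr L j)"
    unfolding sum_distrib_left by (intro sum.cong) simp_all
  have pow: "(m - l) * t powr (m - l - 1) = - w * t powr m"
    using \<open>0 < t\<close> by (simp add: w_def powr_add[symmetric] algebra_simps)
  have "((\<lambda>t. t powr (m - l) - (\<Sum>j<n. C j * t powr (L j - l))) has_real_derivative
      (m - l) * t powr (m - l - 1) - (\<Sum>j<n. C j * ((L j - l) * t powr (L j - l - 1)))) (at t)"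
    using \<open>0 < t\<close> by (auto intro!: derivative_eq_intros sum.cong simp: ac_simps)
  then show ?thesis unfolding w_def[symmetric]
    by (elim DERIV_cong) (simp only: sum pow right_diff_distrib minus_mult_left diff_minus_eq_add)
qed

lemma muntz_step:
  fixes m P :: real and A L :: "nat \<Rightarrow> real"
  assumes m: "0 < m" "m < L n" and new: "L n \<notin> L ` {..<n}"
    and A: "\<And>x. 0 < x \<Longrightarrow> x \<le> 1 \<Longrightarrow> \<bar>x powr m - (\<Sum>j<n. A j * x powr L j)\<bar> \<le> P"
  shows "\<exists>B. \<forall>x. 0 < x \<and> x \<le> 1 \<longrightarrow> \<bar>x powr m - (\<Sum>j<Suc n. B j * x powr L j)\<bar> \<le> (1 - m / L n) * P"
proof -
  define l where "l = L n"
  define C where "C j = A j * (l - m) / (l - L j)" for j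
  define B where "B j = (if j < n then C j else 1 - sum C {..<n})" for j
  \<comment> \<open>\<open>x powr l * R x\<close> is the new error, and \<open>R'\<close> is \<open>- w\<close> times the old one.\<close>
  define R where "R t = t powr (m - l) - (\<Sum>j<n. C j * t powr (L j - l)) - (1 - sum C {..<n})" for t
  define V where "V t = (1 - m / l) * P * (t powr (- l) - 1)" for t
  define w where "w t = (l - m) * t powr (- l - 1)" for t
  have l: "0 < l" "m < l" using m by (auto simp: l_def)
  have P: "0 \<le> P" using A[of 1] by linarith
  have C: "C j * (l - L j) = A j * (l - m)" if "j < n" for j
    using new that by (auto simp: C_def l_def)
  have R': "(R has_real_derivative - w t * (t powr m - (\<Sum>j<n. A j * t powr L j))) (at t)"
    if "0 < t" for t
    using DERIV_diff[OF muntz_remainder_derivative[OF that C] DERIV_const]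
    unfolding R_def w_def by simp
  have V': "(V has_real_derivative - w t * P) (at t)" if "0 < t" for t
    unfolding V_def using that l by (auto intro!: derivative_eq_intros simp: w_def field_simps)
  show ?thesis
  proof (intro exI allI impI)
    fix x :: real assume x: "0 < x \<and> x \<le> 1"
    have "\<bar>R x\<bar> \<le> V x"
    proof (rule abs_le_of_derivative_bound[OF _ R' V'])
      fix t assume t: "x \<le> t" "t \<le> 1"
      then show "\<bar>- w t * (t powr m - (\<Sum>j<n. A j * t powr L j))\<bar> \<le> - (- w t * P)"
        using A[of t] x l by (simp add: w_def abs_mult mult_left_mono)
    qed (use x in \<open>auto simp: R_def V_def\<close>)
    have "x powr m - (\<Sum>j<Suc n. B j * x powr L j) = x powr l * R x"
      using x by (simp add: R_def B_def l_def sum_distrib_left powr_add[symmetric] algebra_simps)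
    then have "\<bar>x powr m - (\<Sum>j<Suc n. B j * x powr L j)\<bar> = x powr l * \<bar>R x\<bar>"
      by (simp add: abs_mult)
    also have "\<dots> \<le> x powr l * V x"
      using \<open>\<bar>R x\<bar> \<le> V x\<close> by (simp add: mult_left_mono)
    also have "\<dots> = (1 - m / l) * P * (1 - x powr l)"
      using x l by (simp add: V_def powr_add[symmetric] field_simps)
    also have "\<dots> \<le> (1 - m / L n) * P"
      using x l P by (simp add: l_def mult_left_le)
    finally show "\<bar>x powr m - (\<Sum>j<Suc n. B j * x powr L j)\<bar> \<le> (1 - m / L n) * P" .
  qed
qed

lemma muntz_iterate:
  fixes m :: real and L :: "nat \<Rightarrow> real"
  assumes m: "0 < m" and L: "inj L" "\<And>j. m < L j"
  shows "\<exists>A. \<forall>x. 0 < x \<and> x \<le> 1 \<longrightarrow>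
           \<bar>x powr m - (\<Sum>j<n. A j * x powr L j)\<bar> \<le> (\<Prod>j<n. 1 - m / L j)"
proof (induction n)
  case 0
  show ?case using m by (simp add: powr_le1)
next
  case (Suc n)
  then obtain A where A: "\<And>x. 0 < x \<Longrightarrow> x \<le> 1 \<Longrightarrow>
      \<bar>x powr m - (\<Sum>j<n. A j * x powr L j)\<bar> \<le> (\<Prod>j<n. 1 - m / L j)"
    by blast
  have "L n \<notin> L ` {..<n}" using L(1) by (auto dest: injD)
  from muntz_step[OF m L(2) this A] show ?case
    by (simp add: mult.commute)
qed

lemma muntz_unit_interval:
  fixes m e :: real and L :: "nat \<Rightarrow> real"
  assumes m: "0 < m" and L: "inj L" "\<And>j. m < L j" and div: "\<not> summable (\<lambda>j. 1 / L j)"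
    and e: "0 < e"
  shows "\<exists>n A. \<forall>x. 0 < x \<and> x \<le> 1 \<longrightarrow> \<bar>x powr m - (\<Sum>j<n. A j * x powr L j)\<bar> \<le> e"
proof -
  have L_pos: "0 < L j" for j using L(2)[of j] m by linarith
  have "\<not> (\<forall>n. (\<Sum>j<n. 1 / L j) \<le> - ln e / m)"
    using div summableI_nonneg_bounded[of "\<lambda>j. 1 / L j"] L_pos by (meson less_eq_real_def zero_less_divide_1_iff)
  then obtain n where n: "- ln e / m < (\<Sum>j<n. 1 / L j)" by (meson not_le)
  have "(\<Prod>j<n. 1 - m / L j) \<le> (\<Prod>j<n. exp (- (m / L j)))"
  proof (rule prod_mono)
    fix j
    have "m / L j < 1" using L(2)[of j] L_pos[of j] by simp
    then show "0 \<le> 1 - m / L j \<and> 1 - m / L j \<le> exp (- (m / L j))"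
      using exp_ge_add_one_self[of "- (m / L j)"] by simp
  qed
  also have "\<dots> = exp (- m * (\<Sum>j<n. 1 / L j))"
    by (simp add: exp_sum[symmetric] sum_distrib_left sum_negf)
  also have "\<dots> < exp (ln e)"
    using n m by (simp add: field_simps)
  also have "\<dots> = e" using e by simp
  finally show ?thesis
    using muntz_iterate[OF m L(1,2), of n] by (meson less_eq_real_def order_trans)
qed

lemma sum_reindex_initial_segment:
  fixes \<sigma> :: "nat \<Rightarrow> nat" and A :: "nat \<Rightarrow> 'a::semiring_0"
  assumes "inj_on \<sigma> {..<n}"
  shows "\<exists>K c. \<forall>\<phi>. (\<Sum>j<n. A j * \<phi> (\<sigma> j)) = (\<Sum>k<K. c k * \<phi> k)"
proof -
  obtain K where K: "\<sigma> ` {..<n} \<subseteq> {..<K}"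
    using finite_nat_iff_bounded[of "\<sigma> ` {..<n}"] by blast
  define c where "c k = (if k \<in> \<sigma> ` {..<n} then A (the_inv_into {..<n} \<sigma> k) else 0)" for k
  have "(\<Sum>j<n. A j * \<phi> (\<sigma> j)) = (\<Sum>k<K. c k * \<phi> k)" for \<phi>
  proof -
    have "(\<Sum>k<K. c k * \<phi> k) = (\<Sum>k\<in>\<sigma> ` {..<n}. c k * \<phi> k)"
      using K by (intro sum.mono_neutral_cong_right) (auto simp: c_def)
    also have "\<dots> = (\<Sum>j<n. A j * \<phi> (\<sigma> j))"
      using assms by (simp add: sum.reindex c_def the_inv_into_f_f)
    finally show ?thesis ..
  qed
  then show ?thesis by blast
qed

lemma muntz_powr_approx:
  fixes \<nu> \<mu> :: "nat \<Rightarrow> real" and m b e :: real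
  assumes inj: "inj \<nu>" and lim: "filterlim \<nu> at_top sequentially"
    and div: "\<not> summable (\<lambda>k. 1 / \<nu> k)" and sub: "range \<nu> \<subseteq> range \<mu>"
    and m: "0 < m" and b: "0 < b" and e: "0 < e"
  shows "\<exists>K c. \<forall>r. 0 < r \<and> r \<le> b \<longrightarrow> \<bar>r powr m - (\<Sum>k<K. c k * r powr \<mu> k)\<bar> \<le> e"
proof -
  obtain k0 where k0: "\<And>k. k0 \<le> k \<Longrightarrow> m < \<nu> k"
    using lim unfolding filterlim_at_top_dense eventually_sequentially by blast
  define L where "L j = \<nu> (j + k0)" for j
  have "inj L" by (rule injI) (use inj in \<open>auto simp: L_def dest: injD\<close>)
  moreover have "m < L j" for j using k0 by (simp add: L_def)
  moreover have "\<not> summable (\<lambda>j. 1 / L j)"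
    using div summable_iff_shift[of "\<lambda>k. 1 / \<nu> k" k0] by (simp add: L_def)
  ultimately obtain n A where A: "\<And>x. 0 < x \<Longrightarrow> x \<le> 1 \<Longrightarrow>
      \<bar>x powr m - (\<Sum>j<n. A j * x powr L j)\<bar> \<le> e / b powr m"
    using muntz_unit_interval[OF m, of L "e / b powr m"] e b by auto
  define \<sigma> where "\<sigma> j = inv \<mu> (L j)" for j
  have \<sigma>: "\<mu> (\<sigma> j) = L j" for j
    using sub unfolding \<sigma>_def L_def by (meson f_inv_into_f range_subsetD)
  then have \<sigma>_inj: "inj_on \<sigma> {..<n}"
    using \<open>inj L\<close> by (metis inj_on_def inj_def)
  obtain K c where Kc: "\<And>\<phi>. (\<Sum>j<n. (b powr m * A j * b powr - L j) * \<phi> (\<sigma> j)) = (\<Sum>k<K. c k * \<phi> k)"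
    using sum_reindex_initial_segment[OF \<sigma>_inj, of "\<lambda>j. b powr m * A j * b powr - L j"] by blast
  have "\<bar>r powr m - (\<Sum>k<K. c k * r powr \<mu> k)\<bar> \<le> e" if r: "0 < r" "r \<le> b" for r
  proof -
    have "(\<Sum>k<K. c k * r powr \<mu> k) = b powr m * (\<Sum>j<n. A j * (r / b) powr L j)"
      using Kc[of "\<lambda>k. r powr \<mu> k"] r b
      by (simp add: \<sigma> sum_distrib_left powr_divide powr_minus field_simps)
    moreover have "r powr m = b powr m * (r / b) powr m"
      using r b by (simp add: powr_divide)
    ultimately have "\<bar>r powr m - (\<Sum>k<K. c k * r powr \<mu> k)\<bar>
        = b powr m * \<bar>(r / b) powr m - (\<Sum>j<n. A j * (r / b) powr L j)\<bar>"
      by (simp only: abs_mult right_diff_distrib[symmetric]) simp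
    also have "\<dots> \<le> b powr m * (e / b powr m)"
      using A[of "r / b"] r b by (intro mult_left_mono) auto
    finally show ?thesis using b by simp
  qed
  then show ?thesis by blast
qed

section \<open>Approximation in L2\<close>

definition L2_approximable :: "'a measure \<Rightarrow> ('a \<Rightarrow> real) set \<Rightarrow> ('a \<Rightarrow> real) \<Rightarrow> bool" where
  "L2_approximable M S f \<longleftrightarrow>
     (\<forall>e>0. \<exists>g\<in>S. integrable M (\<lambda>x. (f x - g x)\<^sup>2) \<and> (\<integral>x. (f x - g x)\<^sup>2 \<partial>M) < e)"

definition measurable_subspace :: "'a measure \<Rightarrow> ('a \<Rightarrow> real) set \<Rightarrow> bool" where
  "measurable_subspace M S \<longleftrightarrow> S \<subseteq> borel_measurable M \<and> (\<lambda>x. 0) \<in> S \<and>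
     (\<forall>p\<in>S. \<forall>q\<in>S. (\<lambda>x. p x + q x) \<in> S) \<and> (\<forall>c. \<forall>p\<in>S. (\<lambda>x. c * p x) \<in> S)"

lemma integral_square_add_le:
  fixes u v :: "'a \<Rightarrow> real"
  assumes u: "u \<in> borel_measurable M" "integrable M (\<lambda>x. (u x)\<^sup>2)"
    and v: "v \<in> borel_measurable M" "integrable M (\<lambda>x. (v x)\<^sup>2)"
  shows "integrable M (\<lambda>x. (u x + v x)\<^sup>2)"
    and "(\<integral>x. (u x + v x)\<^sup>2 \<partial>M) \<le> 2 * (\<integral>x. (u x)\<^sup>2 \<partial>M) + 2 * (\<integral>x. (v x)\<^sup>2 \<partial>M)"
proof -
  have pointwise: "(u x + v x)\<^sup>2 \<le> 2 * (u x)\<^sup>2 + 2 * (v x)\<^sup>2" for x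
    using sum_squares_bound[of "u x" "v x"] by (simp add: power2_eq_square algebra_simps)
  have bound: "integrable M (\<lambda>x. 2 * (u x)\<^sup>2 + 2 * (v x)\<^sup>2)" using u v by auto
  show int: "integrable M (\<lambda>x. (u x + v x)\<^sup>2)"
    by (rule Bochner_Integration.integrable_bound[OF bound]) (use u v pointwise in auto)
  have "(\<integral>x. (u x + v x)\<^sup>2 \<partial>M) \<le> (\<integral>x. 2 * (u x)\<^sup>2 + 2 * (v x)\<^sup>2 \<partial>M)"
    using int bound pointwise by (rule integral_mono)
  also have "\<dots> = 2 * (\<integral>x. (u x)\<^sup>2 \<partial>M) + 2 * (\<integral>x. (v x)\<^sup>2 \<partial>M)"
    using u v by simp
  finally show "(\<integral>x. (u x + v x)\<^sup>2 \<partial>M) \<le> 2 * (\<integral>x. (u x)\<^sup>2 \<partial>M) + 2 * (\<integral>x. (v x)\<^sup>2 \<partial>M)" .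
qed

lemma L2_approximable_member: "g \<in> S \<Longrightarrow> L2_approximable M S g"
  unfolding L2_approximable_def by (intro allI impI bexI[of _ g]) auto

lemma L2_approximable_cong:
  assumes "L2_approximable M S f" "\<And>x. x \<in> space M \<Longrightarrow> f x = f' x"
  shows "L2_approximable M S f'"
proof -
  have "integrable M (\<lambda>x. (f x - g x)\<^sup>2) \<longleftrightarrow> integrable M (\<lambda>x. (f' x - g x)\<^sup>2)" for g
    by (rule Bochner_Integration.integrable_cong[OF refl]) (simp add: assms(2))
  moreover have "(\<integral>x. (f x - g x)\<^sup>2 \<partial>M) = (\<integral>x. (f' x - g x)\<^sup>2 \<partial>M)" for g
    using assms(2) by (intro Bochner_Integration.integral_cong) auto
  ultimately show ?thesis using assms(1) by (simp add: L2_approximable_def)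
qed

lemma L2_approximable_trans:
  assumes f: "L2_approximable M S f" "f \<in> borel_measurable M"
    and S: "\<And>g. g \<in> S \<Longrightarrow> L2_approximable M T g" "S \<subseteq> borel_measurable M"
    and T: "T \<subseteq> borel_measurable M"
  shows "L2_approximable M T f"
  unfolding L2_approximable_def
proof (intro allI impI)
  fix e :: real assume "0 < e"
  then obtain g where g: "g \<in> S" "integrable M (\<lambda>x. (f x - g x)\<^sup>2)" "(\<integral>x. (f x - g x)\<^sup>2 \<partial>M) < e / 4"
    using f(1) unfolding L2_approximable_def by (meson zero_less_divide_iff zero_less_numeral)
  then obtain t where t: "t \<in> T" "integrable M (\<lambda>x. (g x - t x)\<^sup>2)" "(\<integral>x. (g x - t x)\<^sup>2 \<partial>M) < e / 4"
    using S(1) \<open>0 < e\<close> unfolding L2_approximable_def by (meson zero_less_divide_iff zero_less_numeral)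
  have "g \<in> borel_measurable M" "t \<in> borel_measurable M" using g(1) t(1) S(2) T by auto
  then have meas: "(\<lambda>x. f x - g x) \<in> borel_measurable M" "(\<lambda>x. g x - t x) \<in> borel_measurable M"
    using f(2) by auto
  have "f x - t x = (f x - g x) + (g x - t x)" for x by simp
  then show "\<exists>t\<in>T. integrable M (\<lambda>x. (f x - t x)\<^sup>2) \<and> (\<integral>x. (f x - t x)\<^sup>2 \<partial>M) < e"
    using integral_square_add_le[OF meas(1) g(2) meas(2) t(2)] g(3) t(3) t(1) by auto
qed

lemma L2_approximable_add:
  assumes S: "measurable_subspace M S"
    and f: "L2_approximable M S f" "f \<in> borel_measurable M"
    and g: "L2_approximable M S g" "g \<in> borel_measurable M"
  shows "L2_approximable M S (\<lambda>x. f x + g x)"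
  unfolding L2_approximable_def
proof (intro allI impI)
  fix e :: real assume "0 < e"
  then obtain p where p: "p \<in> S" "integrable M (\<lambda>x. (f x - p x)\<^sup>2)" "(\<integral>x. (f x - p x)\<^sup>2 \<partial>M) < e / 4"
    using f(1) unfolding L2_approximable_def by (meson zero_less_divide_iff zero_less_numeral)
  obtain q where q: "q \<in> S" "integrable M (\<lambda>x. (g x - q x)\<^sup>2)" "(\<integral>x. (g x - q x)\<^sup>2 \<partial>M) < e / 4"
    using g(1) \<open>0 < e\<close> unfolding L2_approximable_def by (meson zero_less_divide_iff zero_less_numeral)
  have meas: "(\<lambda>x. f x - p x) \<in> borel_measurable M" "(\<lambda>x. g x - q x) \<in> borel_measurable M"
    using f(2) g(2) p(1) q(1) S by (auto simp: measurable_subspace_def)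
  have eq: "f x + g x - (p x + q x) = (f x - p x) + (g x - q x)" for x by simp
  show "\<exists>r\<in>S. integrable M (\<lambda>x. (f x + g x - r x)\<^sup>2) \<and> (\<integral>x. (f x + g x - r x)\<^sup>2 \<partial>M) < e"
  proof (rule bexI[of _ "\<lambda>x. p x + q x"])
    show "integrable M (\<lambda>x. (f x + g x - (p x + q x))\<^sup>2) \<and> (\<integral>x. (f x + g x - (p x + q x))\<^sup>2 \<partial>M) < e"
      unfolding eq using integral_square_add_le[OF meas(1) p(2) meas(2) q(2)] p(3) q(3) by auto
    show "(\<lambda>x. p x + q x) \<in> S" using S p(1) q(1) by (simp add: measurable_subspace_def)
  qed
qed

lemma L2_approximable_scale:
  assumes S: "measurable_subspace M S" and f: "L2_approximable M S f"
  shows "L2_approximable M S (\<lambda>x. c * f x)"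
  unfolding L2_approximable_def
proof (intro allI impI)
  fix e :: real assume "0 < e"
  then obtain p where p: "p \<in> S" "integrable M (\<lambda>x. (f x - p x)\<^sup>2)"
      "(\<integral>x. (f x - p x)\<^sup>2 \<partial>M) < e / (c\<^sup>2 + 1)"
    using f unfolding L2_approximable_def by (meson add_nonneg_pos divide_pos_pos zero_le_power2 zero_less_one)
  have sq: "(c * f x - c * p x)\<^sup>2 = c\<^sup>2 * (f x - p x)\<^sup>2" for x
    by (simp add: power_mult_distrib right_diff_distrib[symmetric])
  have "c\<^sup>2 * (\<integral>x. (f x - p x)\<^sup>2 \<partial>M) \<le> c\<^sup>2 * (e / (c\<^sup>2 + 1))"
    using p(3) by (intro mult_left_mono) auto
  also have "\<dots> < e" using \<open>0 < e\<close> by (simp add: field_simps add_pos_nonneg)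
  finally have "(\<integral>x. (c * f x - c * p x)\<^sup>2 \<partial>M) < e" unfolding sq by simp
  moreover have "integrable M (\<lambda>x. (c * f x - c * p x)\<^sup>2)" unfolding sq using p(2) by simp
  moreover have "(\<lambda>x. c * p x) \<in> S" using S p(1) by (simp add: measurable_subspace_def)
  ultimately show "\<exists>q\<in>S. integrable M (\<lambda>x. (c * f x - q x)\<^sup>2) \<and> (\<integral>x. (c * f x - q x)\<^sup>2 \<partial>M) < e"
    by (intro bexI[of _ "\<lambda>x. c * p x"]) auto
qed

lemma L2_approximable_sum:
  assumes S: "measurable_subspace M S" and "finite I"
    and f: "\<And>i. i \<in> I \<Longrightarrow> L2_approximable M S (f i)" "\<And>i. i \<in> I \<Longrightarrow> f i \<in> borel_measurable M"
  shows "L2_approximable M S (\<lambda>x. \<Sum>i\<in>I. f i x)"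
  using \<open>finite I\<close> f
proof (induction I rule: finite_induct)
  case empty
  then show ?case using S by (simp add: measurable_subspace_def L2_approximable_member)
next
  case (insert i I)
  then show ?case
    by (simp add: L2_approximable_add[OF S] borel_measurable_sum)
qed

lemma L2_approximable_uniform:
  assumes M: "finite_measure M" and f: "f \<in> borel_measurable M" and S: "S \<subseteq> borel_measurable M"
    and unif: "\<And>d. 0 < d \<Longrightarrow> \<exists>g\<in>S. \<forall>x\<in>space M. \<bar>f x - g x\<bar> \<le> d"
  shows "L2_approximable M S f"
  unfolding L2_approximable_def
proof (intro allI impI)
  interpret finite_measure M by (fact M)
  fix e :: real assume "0 < e"
  define V where "V = measure M (space M)"
  define d where "d = sqrt (e / (V + 1))"
  have "0 \<le> V" by (simp add: V_def)
  then have "0 < d" using \<open>0 < e\<close> by (simp add: d_def)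
  then obtain g where g: "g \<in> S" "\<And>x. x \<in> space M \<Longrightarrow> \<bar>f x - g x\<bar> \<le> d"
    using unif by blast
  have sq: "(f x - g x)\<^sup>2 \<le> d\<^sup>2" if "x \<in> space M" for x
    using g(2)[OF that] by (metis abs_ge_zero power2_abs power_mono)
  have meas: "(\<lambda>x. (f x - g x)\<^sup>2) \<in> borel_measurable M" using f g(1) S by auto
  have int: "integrable M (\<lambda>x. (f x - g x)\<^sup>2)"
    by (rule integrable_const_bound[where B = "d\<^sup>2"]) (use meas sq in auto)
  have "(\<integral>x. (f x - g x)\<^sup>2 \<partial>M) \<le> (\<integral>x. d\<^sup>2 \<partial>M)"
    using int sq by (intro integral_mono) auto
  also have "\<dots> = d\<^sup>2 * V" by (simp add: V_def)
  also have "\<dots> < e"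
    using \<open>0 \<le> V\<close> \<open>0 < e\<close> by (simp add: d_def field_simps)
  finally show "\<exists>g\<in>S. integrable M (\<lambda>x. (f x - g x)\<^sup>2) \<and> (\<integral>x. (f x - g x)\<^sup>2 \<partial>M) < e"
    using g(1) int by blast
qed

lemma L2_approximable_AE_eq:
  assumes "f \<in> borel_measurable M" "g \<in> borel_measurable M" "AE x in M. f x = g x"
  shows "L2_approximable M {g} f"
proof -
  have ae: "AE x in M. 0 = (f x - g x)\<^sup>2" using assms(3) by eventually_elim simp
  have "integrable M (\<lambda>x. (f x - g x)\<^sup>2)"
    using ae by (rule integrable_cong_AE_imp[OF integrable_zero, rotated]) (use assms in measurable)
  moreover have "(\<integral>x. (f x - g x)\<^sup>2 \<partial>M) = 0"
    using integral_cong_AE[OF _ _ ae] assms by simp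
  ultimately show ?thesis unfolding L2_approximable_def by auto
qed

lemma L2_approximable_compose_quantisers:
  fixes g :: "'a \<Rightarrow> real" and s :: "nat \<Rightarrow> real \<Rightarrow> real"
  assumes g: "g \<in> borel_measurable M" "integrable M (\<lambda>x. (g x)\<^sup>2)"
    and s: "\<And>i. s i \<in> borel_measurable borel" "\<And>y. (\<lambda>i. s i y) \<longlonglongrightarrow> y" "\<And>i y. \<bar>s i y\<bar> \<le> 2 * \<bar>y\<bar>"
  shows "L2_approximable M (range (\<lambda>i x. s i (g x))) g"
  unfolding L2_approximable_def
proof (intro allI impI)
  fix e :: real assume "0 < e"
  have sq_meas: "(\<lambda>x. (g x - s i (g x))\<^sup>2) \<in> borel_measurable M" for i
    using g(1) measurable_compose[OF g(1) s(1)] by (intro borel_measurable_power borel_measurable_diff)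
  have bound: "integrable M (\<lambda>x. 9 * (g x)\<^sup>2)" using g(2) by simp
  have dominated: "(g x - s i (g x))\<^sup>2 \<le> 9 * (g x)\<^sup>2" for i x
  proof -
    have "\<bar>g x - s i (g x)\<bar> \<le> \<bar>3 * g x\<bar>" using s(3)[of i "g x"] by (simp add: abs_mult)
    then have "(g x - s i (g x))\<^sup>2 \<le> (3 * g x)\<^sup>2" by (simp only: abs_le_square_iff)
    then show ?thesis by (simp add: power_mult_distrib)
  qed
  have "(\<lambda>i. \<integral>x. (g x - s i (g x))\<^sup>2 \<partial>M) \<longlonglongrightarrow> (\<integral>x. 0 \<partial>M)"
  proof (rule integral_dominated_convergence[OF _ sq_meas bound])
    show "AE x in M. norm ((g x - s i (g x))\<^sup>2) \<le> 9 * (g x)\<^sup>2" for i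
      using dominated by simp
    have "(\<lambda>i. (g x - s i (g x))\<^sup>2) \<longlonglongrightarrow> (g x - g x)\<^sup>2" for x
      by (intro tendsto_intros s(2))
    then show "AE x in M. (\<lambda>i. (g x - s i (g x))\<^sup>2) \<longlonglongrightarrow> 0" by simp
  qed simp
  then have "\<forall>\<^sub>F i in sequentially. (\<integral>x. (g x - s i (g x))\<^sup>2 \<partial>M) < e"
    using \<open>0 < e\<close> by (simp add: order_tendstoD(2))
  then obtain N where "\<And>i. N \<le> i \<Longrightarrow> (\<integral>x. (g x - s i (g x))\<^sup>2 \<partial>M) < e"
    unfolding eventually_sequentially by blast
  moreover have "integrable M (\<lambda>x. (g x - s N (g x))\<^sup>2)"
    using bound sq_meas by (rule Bochner_Integration.integrable_bound) (simp add: dominated)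
  ultimately show "\<exists>t\<in>range (\<lambda>i x. s i (g x)). integrable M (\<lambda>x. (g x - t x)\<^sup>2) \<and> (\<integral>x. (g x - t x)\<^sup>2 \<partial>M) < e"
    by (intro bexI[of _ "\<lambda>x. s N (g x)"]) auto
qed

lemma measurable_lebesgue_on_AE_eq:
  fixes f g :: "'a::euclidean_space \<Rightarrow> real"
  assumes A: "A \<in> sets lebesgue" and f: "f \<in> borel_measurable (lebesgue_on A)"
    and ae: "AE x in lebesgue_on A. f x = g x"
  shows "g \<in> borel_measurable (lebesgue_on A)"
proof -
  have "(\<lambda>x. if x \<in> A then f x else 0) \<in> borel_measurable lebesgue"
    using f borel_measurable_if[OF A] by blast
  moreover have "AE x in lebesgue. x \<in> A \<longrightarrow> f x = g x"
    using ae A by (simp add: AE_restrict_space_iff)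
  then have "AE x in lebesgue. (if x \<in> A then f x else 0) = (if x \<in> A then g x else 0)"
    by eventually_elim simp
  ultimately have "(\<lambda>x. if x \<in> A then g x else 0) \<in> borel_measurable lebesgue"
    by (rule borel_measurable_AE)
  then show ?thesis using borel_measurable_if[OF A] by blast
qed

lemma sets_lebesgue_closed_open_sandwich:
  fixes E :: "'a::euclidean_space set"
  assumes "E \<in> sets lebesgue" "0 < e"
  obtains K U where "closed K" "open U" "K \<subseteq> E" "E \<subseteq> U" "U - K \<in> lmeasurable"
    "measure lebesgue (U - K) < e"
proof -
  have "0 < e / 2" using \<open>0 < e\<close> by simp
  obtain U where U: "open U" "E \<subseteq> U" "U - E \<in> lmeasurable" "emeasure lebesgue (U - E) < ennreal (e / 2)"
    using sets_lebesgue_outer_open[OF assms(1) \<open>0 < e / 2\<close>] by blast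
  obtain K where K: "closed K" "K \<subseteq> E" "E - K \<in> lmeasurable" "emeasure lebesgue (E - K) < ennreal (e / 2)"
    using sets_lebesgue_inner_closed[OF assms(1) \<open>0 < e / 2\<close>] by blast
  have UK: "U - K = (U - E) \<union> (E - K)" using K(2) U(2) by blast
  have "measure lebesgue (U - K) \<le> measure lebesgue (U - E) + measure lebesgue (E - K)"
    unfolding UK using U(3) K(3) by (rule measure_Un_le[OF fmeasurableD fmeasurableD])
  also have "\<dots> < e"
    using U(3,4) K(3,4) \<open>0 < e\<close> by (simp add: emeasure_eq_measure2 ennreal_less_iff)
  finally have "measure lebesgue (U - K) < e" .
  moreover have "U - K \<in> lmeasurable" unfolding UK using U(3) K(3) by (rule fmeasurable.Un)
  ultimately show ?thesis using that K(1,2) U(1,2) by blast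
qed

lemma integral_lebesgue_on_le_measure:
  fixes u :: "'a::euclidean_space \<Rightarrow> real"
  assumes A: "A \<in> lmeasurable" and D: "D \<in> lmeasurable"
    and u: "u \<in> borel_measurable (lebesgue_on A)" "\<And>x. x \<in> A \<Longrightarrow> 0 \<le> u x"
      "\<And>x. x \<in> A \<Longrightarrow> u x \<le> indicator D x"
  shows "integrable (lebesgue_on A) u" and "(\<integral>x. u x \<partial>lebesgue_on A) \<le> measure lebesgue D"
proof -
  interpret finite_measure "lebesgue_on A" using A by (rule finite_measure_lebesgue_on)
  have DA: "D \<inter> A \<in> sets (lebesgue_on A)" using D A by (auto simp: sets_restrict_space_iff fmeasurableD)
  have ind: "integrable (lebesgue_on A) (indicator (D \<inter> A) :: 'a \<Rightarrow> real)"
    using DA by (intro integrable_const_bound[where B = 1]) auto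
  have "\<bar>u x\<bar> \<le> 1" if "x \<in> A" for x
    using u(2,3)[OF that] by (cases "x \<in> D") auto
  then show int: "integrable (lebesgue_on A) u"
    using u(1) by (intro integrable_const_bound[where B = 1]) auto
  have "(\<integral>x. u x \<partial>lebesgue_on A) \<le> (\<integral>x. indicator (D \<inter> A) x \<partial>lebesgue_on A)"
    by (rule integral_mono[OF int ind]) (use u(3) in \<open>auto simp: indicator_def\<close>)
  also have "\<dots> = measure lebesgue (D \<inter> A)"
    using DA A by (simp add: measure_restrict_space fmeasurableD)
  also have "\<dots> \<le> measure lebesgue D"
    using D A by (intro measure_mono_fmeasurable) (auto simp: fmeasurableD)
  finally show "(\<integral>x. u x \<partial>lebesgue_on A) \<le> measure lebesgue D" .
qed

section \<open>Radial functions\<close>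

definition radial_continuous :: "('a::real_normed_vector \<Rightarrow> real) set" where
  "radial_continuous = {\<lambda>x. G (norm x) | G. continuous_on UNIV G}"

lemma radial_continuous_measurable:
  fixes A :: "'a::euclidean_space set"
  assumes "A \<in> sets lebesgue" "continuous_on UNIV G"
  shows "(\<lambda>x. G (norm x)) \<in> borel_measurable (lebesgue_on A)"
  using assms by (intro continuous_imp_measurable_on_sets_lebesgue continuous_on_compose2[OF assms(2)])
    (auto intro: continuous_intros)

lemma measurable_subspace_radial_continuous:
  fixes A :: "'a::euclidean_space set"
  assumes "A \<in> sets lebesgue"
  shows "measurable_subspace (lebesgue_on A) radial_continuous"
  unfolding measurable_subspace_def radial_continuous_def
proof (intro conjI ballI allI subsetI)
  show "(\<lambda>x. 0) \<in> {\<lambda>x. G (norm x) |G. continuous_on UNIV G}"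
    by (intro CollectI exI[of _ "\<lambda>_. 0"]) auto
  fix p q :: "'a \<Rightarrow> real" assume "p \<in> {\<lambda>x::'a. G (norm x) |G. continuous_on UNIV G}" "q \<in> {\<lambda>x. G (norm x) |G. continuous_on UNIV G}"
  then obtain G G' where "p = (\<lambda>x. G (norm x))" "q = (\<lambda>x. G' (norm x))"
    "continuous_on UNIV G" "continuous_on UNIV G'" by blast
  then show "(\<lambda>x. p x + q x) \<in> {\<lambda>x. G (norm x) |G. continuous_on UNIV G}"
    by (auto intro!: exI[of _ "\<lambda>r. G r + G' r"] continuous_intros)
next
  fix c and p :: "'a \<Rightarrow> real" assume "p \<in> {\<lambda>x::'a. G (norm x) |G. continuous_on UNIV G}"
  then obtain G where "p = (\<lambda>x. G (norm x))" "continuous_on UNIV G" by blast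
  then show "(\<lambda>x. c * p x) \<in> {\<lambda>x. G (norm x) |G. continuous_on UNIV G}"
    by (auto intro!: exI[of _ "\<lambda>r. c * G r"] continuous_intros)
next
  fix p :: "'a \<Rightarrow> real" assume "p \<in> {\<lambda>x::'a. G (norm x) |G. continuous_on UNIV G}"
  then show "p \<in> borel_measurable (lebesgue_on A)"
    using radial_continuous_measurable[OF assms] by blast
qed

lemma radial_Urysohn:
  fixes A K U :: "'a::euclidean_space set"
  assumes A: "compact A" and K: "closed K" "K \<subseteq> {x \<in> A. norm x \<in> S}"
    and U: "open U" "{x \<in> A. norm x \<in> S} \<subseteq> U"
  obtains G :: "real \<Rightarrow> real" where "continuous_on UNIV G"
    "\<And>x. x \<in> A \<Longrightarrow> (indicator {x \<in> A. norm x \<in> S} x - G (norm x))\<^sup>2 \<le> indicator (U - K) x"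
proof -
  define E where "E = {x \<in> A. norm x \<in> S}"
  have "compact (A \<inter> K)" using A K(1) by (rule compact_Int_closed)
  moreover have "A \<inter> K = K" using K(2) by blast
  ultimately have C: "closed (norm ` K)"
    by (metis compact_continuous_image compact_imp_closed continuous_on_norm_id)
  have Z: "closed (norm ` (A - U))"
    using A U(1) by (intro compact_imp_closed compact_continuous_image continuous_on_norm_id)
      (simp add: Diff_eq compact_Int_closed closed_Compl)
  have disj: "norm ` K \<inter> norm ` (A - U) = {}"
    using K(2) U(2) by fastforce
  obtain G :: "real \<Rightarrow> real" where G: "continuous_on UNIV G" "\<And>r. G r \<in> closed_segment 1 0"
    "\<And>r. r \<in> norm ` K \<Longrightarrow> G r = 1" "\<And>r. r \<in> norm ` (A - U) \<Longrightarrow> G r = 0"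
    using Urysohn[OF C Z disj, of 1 0] by blast
  have pointwise: "(indicator E x - G (norm x))\<^sup>2 \<le> indicator (U - K) x" if "x \<in> A" for x
  proof (cases "x \<in> K")
    case True
    then show ?thesis using K(2) G(3) by (simp add: E_def subset_iff)
  next
    case False
    have "G (norm x) \<in> {0..1}" using G(2) by (simp add: closed_segment_eq_real_ivl)
    then have "(indicator E x - G (norm x))\<^sup>2 \<le> 1"
      by (auto simp: indicator_def abs_le_square_iff power2_eq_square intro: mult_le_one)
    then show ?thesis using False that U(2) G(4) by (auto simp: E_def indicator_def)
  qed
  show ?thesis by (rule that[OF G(1) pointwise[unfolded E_def]])
qed

lemma radial_indicator_L2_approximable:
  fixes A :: "'a::euclidean_space set"
  assumes A: "compact A" and E: "{x \<in> A. norm x \<in> S} \<in> sets lebesgue"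
  shows "L2_approximable (lebesgue_on A) radial_continuous (indicator {x \<in> A. norm x \<in> S})"
  unfolding L2_approximable_def
proof (intro allI impI)
  fix e :: real assume "0 < e"
  define E where "E = {x \<in> A. norm x \<in> S}"
  have A_leb: "A \<in> lmeasurable" using A by (rule lmeasurable_compact)
  obtain K U where KU: "closed K" "open U" "K \<subseteq> E" "E \<subseteq> U" "U - K \<in> lmeasurable"
    "measure lebesgue (U - K) < e"
    using sets_lebesgue_closed_open_sandwich[OF E[folded E_def] \<open>0 < e\<close>] by blast
  obtain G :: "real \<Rightarrow> real" where G: "continuous_on UNIV G"
    "\<And>x. x \<in> A \<Longrightarrow> (indicator E x - G (norm x))\<^sup>2 \<le> indicator (U - K) x"
    using radial_Urysohn[OF A KU(1) KU(3)[unfolded E_def] KU(2) KU(4)[unfolded E_def]]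
    unfolding E_def by blast
  have "E \<in> sets (lebesgue_on A)" using E A_leb by (auto simp: E_def sets_restrict_space_iff)
  then have "(\<lambda>x. (indicator E x - G (norm x))\<^sup>2) \<in> borel_measurable (lebesgue_on A)"
    using radial_continuous_measurable[OF fmeasurableD[OF A_leb] G(1)] by measurable
  note bound = integral_lebesgue_on_le_measure[OF A_leb KU(5) this _ G(2)]
  have "(\<lambda>x. G (norm x)) \<in> radial_continuous" using G(1) by (auto simp: radial_continuous_def)
  then show "\<exists>g\<in>radial_continuous. integrable (lebesgue_on A) (\<lambda>x. (indicator {x \<in> A. norm x \<in> S} x - g x)\<^sup>2)
       \<and> (\<integral>x. (indicator {x \<in> A. norm x \<in> S} x - g x)\<^sup>2 \<partial>lebesgue_on A) < e"
    using bound KU(6) unfolding E_def by (intro bexI[of _ "\<lambda>x. G (norm x)"]) force+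
qed

lemma simple_radial_L2_approximable:
  fixes A :: "'a::euclidean_space set" and h :: "real \<Rightarrow> real"
  assumes A: "compact A" and h: "(\<lambda>x. h (norm x)) \<in> borel_measurable (lebesgue_on A)"
    and s: "simple_function borel s"
  shows "L2_approximable (lebesgue_on A) radial_continuous (\<lambda>x. s (h (norm x)))"
proof -
  define M where "M = lebesgue_on A"
  define E where "E y = {x \<in> A. norm x \<in> {r. s (h r) = y}}" for y
  have A_leb: "A \<in> sets lebesgue" using A by (simp add: lmeasurable_compact fmeasurableD)
  have S: "measurable_subspace M radial_continuous"
    unfolding M_def using A_leb by (rule measurable_subspace_radial_continuous)
  have "(\<lambda>x. s (h (norm x))) \<in> borel_measurable M"
    unfolding M_def by (rule measurable_compose[OF h borel_measurable_simple_function[OF s]])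
  then have "(\<lambda>x. s (h (norm x))) -` {y} \<inter> space M \<in> sets M" for y by measurable
  then have E_M: "E y \<in> sets M" for y by (simp add: E_def M_def vimage_def Int_def conj_commute)
  then have E_leb: "E y \<in> sets lebesgue" for y
    using A_leb by (simp add: M_def sets_restrict_space_iff)
  have "finite (range s)" using simple_functionD(1)[OF s] by simp
  moreover have "L2_approximable M radial_continuous (\<lambda>x. y * indicator (E y) x)" for y
    using radial_indicator_L2_approximable[OF A E_leb[unfolded E_def]]
    by (intro L2_approximable_scale[OF S]) (simp add: M_def E_def)
  moreover have "(\<lambda>x. y * indicator (E y) x) \<in> borel_measurable M" for y
    using E_M by measurable
  ultimately have "L2_approximable M radial_continuous (\<lambda>x. \<Sum>y\<in>range s. y * indicator (E y) x)"
    by (intro L2_approximable_sum[OF S]) auto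
  moreover have "(\<Sum>y\<in>range s. y * indicator (E y) x) = s (h (norm x))" if "x \<in> space M" for x
  proof -
    have "(\<Sum>y\<in>range s. y * indicator (E y) x) = (\<Sum>y\<in>range s. if y = s (h (norm x)) then y else 0)"
      using that by (intro sum.cong) (auto simp: M_def E_def)
    also have "\<dots> = s (h (norm x))" using \<open>finite (range s)\<close> by simp
    finally show ?thesis .
  qed
  ultimately show ?thesis unfolding M_def by (rule L2_approximable_cong)
qed

lemma L2_rad_L2_approximable:
  fixes A :: "'a::euclidean_space set"
  assumes A: "compact A" and f: "f \<in> L2_rad A"
  shows "L2_approximable (lebesgue_on A) radial_continuous f"
proof -
  define M where "M = lebesgue_on A"
  have A_leb: "A \<in> sets lebesgue" using A by (simp add: lmeasurable_compact fmeasurableD)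
  have S_meas: "radial_continuous \<subseteq> borel_measurable M"
    using measurable_subspace_radial_continuous[OF A_leb] by (simp add: M_def measurable_subspace_def)
  have f_meas: "f \<in> borel_measurable M" and f_sq: "integrable M (\<lambda>x. (f x)\<^sup>2)"
    using f by (auto simp: L2_rad_def L2_on_def M_def)
  obtain h where ae: "AE x in M. f x = h (norm x)"
    using f unfolding L2_rad_def M_def by blast
  define g :: "'a \<Rightarrow> real" where "g x = h (norm x)" for x
  \<comment> \<open>\<open>h\<close> itself need not be Borel measurable, but \<open>g\<close> is, by completeness of Lebesgue measure.\<close>
  have g_meas: "g \<in> borel_measurable M"
    unfolding M_def g_def by (rule measurable_lebesgue_on_AE_eq[OF A_leb f_meas[unfolded M_def] ae[unfolded M_def]])
  have "AE x in M. (f x)\<^sup>2 = (g x)\<^sup>2" using ae by eventually_elim (simp add: g_def)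
  then have g_sq: "integrable M (\<lambda>x. (g x)\<^sup>2)"
    by (rule integrable_cong_AE_imp[OF f_sq, rotated]) (use g_meas in measurable)
  obtain s :: "nat \<Rightarrow> real \<Rightarrow> real" where s: "\<And>i. simple_function borel (s i)"
    "\<And>y. (\<lambda>i. s i y) \<longlonglongrightarrow> y" "\<And>i y. dist (s i y) 0 \<le> 2 * dist y 0"
    using borel_measurable_implies_sequence_metric[of "\<lambda>y::real. y" borel 0] by (simp add: space_borel) blast
  \<comment> \<open>Quantising the values of \<open>g\<close> keeps the level sets radial.\<close>
  have "L2_approximable M (range (\<lambda>i x. s i (g x))) g"
    using s by (intro L2_approximable_compose_quantisers[OF g_meas g_sq] borel_measurable_simple_function)
      (simp_all add: dist_real_def)
  then have g_approx: "L2_approximable M radial_continuous g"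
  proof (rule L2_approximable_trans[OF _ g_meas _ _ S_meas])
    show "L2_approximable M radial_continuous t" if "t \<in> range (\<lambda>i x. s i (g x))" for t
      using that simple_radial_L2_approximable[OF A g_meas[unfolded M_def g_def] s(1)]
      unfolding M_def g_def by blast
    show "range (\<lambda>i x. s i (g x)) \<subseteq> borel_measurable M"
      using measurable_compose[OF g_meas borel_measurable_simple_function[OF s(1)]] by blast
  qed
  show ?thesis unfolding M_def[symmetric]
    by (rule L2_approximable_trans[OF L2_approximable_AE_eq[OF f_meas g_meas] f_meas _ _ S_meas])
      (use ae g_approx g_meas in \<open>auto simp: g_def\<close>)
qed

definition radial_polynomial :: "('a::real_normed_vector \<Rightarrow> real) set" where
  "radial_polynomial = {\<lambda>x. \<Sum>i\<le>n. a i * norm x ^ i | a n. True}"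

lemma radial_polynomial_subset: "radial_polynomial \<subseteq> radial_continuous"
proof
  fix p :: "'a \<Rightarrow> real" assume "p \<in> radial_polynomial"
  then obtain a n where "p = (\<lambda>x. \<Sum>i\<le>n. a i * norm x ^ i)" by (auto simp: radial_polynomial_def)
  then show "p \<in> radial_continuous" unfolding radial_continuous_def
    by (intro CollectI exI[of _ "\<lambda>r. \<Sum>i\<le>n. a i * r ^ i"]) (auto intro!: continuous_intros)
qed

lemma radial_continuous_L2_approximable_polynomial:
  fixes A :: "'a::euclidean_space set"
  assumes A: "compact A" and g: "g \<in> radial_continuous"
  shows "L2_approximable (lebesgue_on A) radial_polynomial g"
proof -
  obtain G where g_eq: "g = (\<lambda>x. G (norm x))" and G: "continuous_on UNIV G"
    using g by (auto simp: radial_continuous_def)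
  have A_leb: "A \<in> lmeasurable" using A by (rule lmeasurable_compact)
  have S_meas: "radial_continuous \<subseteq> borel_measurable (lebesgue_on A)"
    using measurable_subspace_radial_continuous[OF fmeasurableD[OF A_leb]]
    by (simp add: measurable_subspace_def)
  show ?thesis
  proof (rule L2_approximable_uniform)
    show "finite_measure (lebesgue_on A)" using A_leb by (rule finite_measure_lebesgue_on)
    show "g \<in> borel_measurable (lebesgue_on A)" using g S_meas by blast
    show "radial_polynomial \<subseteq> borel_measurable (lebesgue_on A)"
      using radial_polynomial_subset S_meas by blast
  next
    fix d :: real assume "0 < d"
    have "compact (norm ` A)" using A by (intro compact_continuous_image continuous_on_norm_id)
    from Stone_Weierstrass_real_polynomial_function[OF this continuous_on_subset[OF G subset_UNIV] \<open>0 < d\<close>]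
    obtain p where p: "real_polynomial_function p" "\<And>r. r \<in> norm ` A \<Longrightarrow> \<bar>G r - p r\<bar> < d"
      by blast
    from p(1) obtain a n where "p = (\<lambda>r. \<Sum>i\<le>n. a i * r ^ i)"
      by (auto simp: real_polynomial_function_iff_sum)
    then have "(\<lambda>x. p (norm x)) \<in> radial_polynomial"
      unfolding radial_polynomial_def by (intro CollectI exI[of _ a] exI[of _ n]) simp
    moreover have "\<bar>g x - p (norm x)\<bar> \<le> d" if "x \<in> space (lebesgue_on A)" for x
      using p(2)[of "norm x"] that by (simp add: g_eq)
    ultimately show "\<exists>q\<in>radial_polynomial. \<forall>x\<in>space (lebesgue_on A). \<bar>g x - q x\<bar> \<le> d"
      by (intro bexI) auto
  qed
qed

lemma L2_rad_L2_approximable_polynomial: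
  fixes A :: "'a::euclidean_space set"
  assumes A: "compact A" and f: "f \<in> L2_rad A"
  shows "L2_approximable (lebesgue_on A) radial_polynomial f"
proof (rule L2_approximable_trans[OF L2_rad_L2_approximable[OF A f]])
  have "A \<in> sets lebesgue" using A by (simp add: lmeasurable_compact fmeasurableD)
  then have "radial_continuous \<subseteq> borel_measurable (lebesgue_on A)"
    using measurable_subspace_radial_continuous[of A] by (simp add: measurable_subspace_def)
  then show "radial_continuous \<subseteq> borel_measurable (lebesgue_on A)"
    and "radial_polynomial \<subseteq> borel_measurable (lebesgue_on A)"
    using radial_polynomial_subset by auto
  show "f \<in> borel_measurable (lebesgue_on A)" using f by (simp add: L2_rad_def L2_on_def)
qed (rule radial_continuous_L2_approximable_polynomial[OF A])

section \<open>Density of the spaces H\<close>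

lemma sum_lessThan_extend:
  fixes c :: "nat \<Rightarrow> 'a::semiring_0"
  assumes "K \<le> K'"
  shows "(\<Sum>k<K. c k * \<phi> k) = (\<Sum>k<K'. (if k < K then c k else 0) * \<phi> k)"
  using assms by (intro sum.mono_neutral_cong_left) auto

lemma Union_H_memI:
  assumes "\<And>x. g x = (\<Sum>k<K. c k * norm x powr \<mu> k) + b"
  shows "g \<in> (\<Union>K. H \<mu> K)"
proof -
  have "g = (\<lambda>x. (\<Sum>k<K. c k * norm x powr \<mu> k) + b)" using assms by blast
  then show ?thesis unfolding H_def by blast
qed

lemma measurable_subspace_Union_H:
  fixes A :: "'a::euclidean_space set"
  assumes "A \<in> sets lebesgue"
  shows "measurable_subspace (lebesgue_on A) (\<Union>K. H \<mu> K)"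
  unfolding measurable_subspace_def
proof (intro conjI ballI allI subsetI)
  have [measurable]: "(\<lambda>x::'a. norm x) \<in> borel_measurable (lebesgue_on A)"
    using radial_continuous_measurable[OF assms, of "\<lambda>r. r"] by simp
  show "p \<in> borel_measurable (lebesgue_on A)" if "p \<in> (\<Union>K. H \<mu> K :: ('a \<Rightarrow> real) set)" for p
    using that by (auto simp: H_def)
  show "(\<lambda>x. 0) \<in> (\<Union>K. H \<mu> K :: ('a \<Rightarrow> real) set)"
    by (rule Union_H_memI[where K = 0 and b = 0]) simp
next
  fix p q :: "'a \<Rightarrow> real" assume "p \<in> (\<Union>K. H \<mu> K)" "q \<in> (\<Union>K. H \<mu> K)"
  then obtain K K' c c' b b' where
    p: "p = (\<lambda>x. (\<Sum>k<K. c k * norm x powr \<mu> k) + b)" and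
    q: "q = (\<lambda>x. (\<Sum>k<K'. c' k * norm x powr \<mu> k) + b')"
    by (auto simp: H_def)
  define d where "d k = (if k < K then c k else 0) + (if k < K' then c' k else 0)" for k
  have "p x + q x = (\<Sum>k<max K K'. d k * norm x powr \<mu> k) + (b + b')" for x :: 'a
    unfolding p q d_def sum_lessThan_extend[OF max.cobounded1[of K K']]
      sum_lessThan_extend[OF max.cobounded2[of K' K]]
    by (simp add: sum.distrib distrib_right)
  then show "(\<lambda>x. p x + q x) \<in> (\<Union>K. H \<mu> K)"
    by (rule Union_H_memI)
next
  fix a and p :: "'a \<Rightarrow> real" assume "p \<in> (\<Union>K. H \<mu> K)"
  then obtain K c b where p: "p = (\<lambda>x. (\<Sum>k<K. c k * norm x powr \<mu> k) + b)"
    by (auto simp: H_def)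
  have "a * p x = (\<Sum>k<K. (a * c k) * norm x powr \<mu> k) + a * b" for x
    unfolding p by (simp add: sum_distrib_left distrib_left mult.assoc)
  then show "(\<lambda>x. a * p x) \<in> (\<Union>K. H \<mu> K)"
    by (rule Union_H_memI)
qed

lemma norm_power_L2_approximable_H:
  fixes A :: "'a::euclidean_space set" and \<nu> \<mu> :: "nat \<Rightarrow> real"
  assumes A: "compact A" "0 \<notin> A"
    and \<nu>: "inj \<nu>" "filterlim \<nu> at_top sequentially" "\<not> summable (\<lambda>k. 1 / \<nu> k)" "range \<nu> \<subseteq> range \<mu>"
  shows "L2_approximable (lebesgue_on A) (\<Union>K. H \<mu> K) (\<lambda>x. norm x ^ i)"
proof (cases "i = 0")
  case True
  have "(\<lambda>x::'a. norm x ^ i) \<in> (\<Union>K. H \<mu> K)"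
    by (rule Union_H_memI[where K = 0 and b = 1]) (simp add: True)
  then show ?thesis by (rule L2_approximable_member)
next
  case False
  have A_leb: "A \<in> lmeasurable" using A(1) by (rule lmeasurable_compact)
  obtain b where b: "0 < b" "\<And>x. x \<in> A \<Longrightarrow> norm x \<le> b"
    using compact_imp_bounded[OF A(1)] bounded_pos by blast
  show ?thesis
  proof (rule L2_approximable_uniform)
    show "finite_measure (lebesgue_on A)" using A_leb by (rule finite_measure_lebesgue_on)
    show "(\<lambda>x. norm x ^ i) \<in> borel_measurable (lebesgue_on A)"
      by (rule radial_continuous_measurable[OF fmeasurableD[OF A_leb]]) (intro continuous_intros)
    show "(\<Union>K. H \<mu> K) \<subseteq> borel_measurable (lebesgue_on A)"
      using measurable_subspace_Union_H[OF fmeasurableD[OF A_leb]] by (simp add: measurable_subspace_def)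
  next
    fix d :: real assume "0 < d"
    obtain K c where Kc: "\<And>r. 0 < r \<Longrightarrow> r \<le> b \<Longrightarrow> \<bar>r powr real i - (\<Sum>k<K. c k * r powr \<mu> k)\<bar> \<le> d"
      using muntz_powr_approx[OF \<nu>, of "real i" b d] False b(1) \<open>0 < d\<close> by auto
    have mem: "(\<lambda>x::'a. (\<Sum>k<K. c k * norm x powr \<mu> k)) \<in> (\<Union>K. H \<mu> K)"
      by (rule Union_H_memI[where b = 0]) simp
    have close: "\<bar>norm x ^ i - (\<Sum>k<K. c k * norm x powr \<mu> k)\<bar> \<le> d" if "x \<in> space (lebesgue_on A)" for x
    proof -
      have "x \<in> A" using that by simp
      then have "0 < norm x" "norm x \<le> b" using A(2) b(2) by (auto simp: zero_less_norm_iff)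
      then show ?thesis using Kc[of "norm x"] by (simp add: powr_realpow)
    qed
    show "\<exists>g\<in>\<Union>K. H \<mu> K. \<forall>x\<in>space (lebesgue_on A). \<bar>norm x ^ i - g x\<bar> \<le> d"
      using close by (intro bexI[OF _ mem]) blast
  qed
qed

lemma radial_polynomial_L2_approximable_H:
  fixes A :: "'a::euclidean_space set" and \<nu> \<mu> :: "nat \<Rightarrow> real"
  assumes A: "compact A" "0 \<notin> A"
    and \<nu>: "inj \<nu>" "filterlim \<nu> at_top sequentially" "\<not> summable (\<lambda>k. 1 / \<nu> k)" "range \<nu> \<subseteq> range \<mu>"
    and p: "p \<in> radial_polynomial"
  shows "L2_approximable (lebesgue_on A) (\<Union>K. H \<mu> K) p"
proof -
  obtain a n where p_eq: "p = (\<lambda>x. \<Sum>i\<le>n. a i * norm x ^ i)"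
    using p by (auto simp: radial_polynomial_def)
  have A_leb: "A \<in> sets lebesgue" using A(1) by (simp add: lmeasurable_compact fmeasurableD)
  have "(\<lambda>x. norm x ^ i) \<in> borel_measurable (lebesgue_on A)" for i
    by (rule radial_continuous_measurable[OF A_leb]) (intro continuous_intros)
  then show ?thesis unfolding p_eq
    using norm_power_L2_approximable_H[OF A \<nu>] measurable_subspace_Union_H[OF A_leb]
    by (intro L2_approximable_sum L2_approximable_scale) auto
qed

lemma L2_rad_L2_approximable_H:
  fixes A :: "'a::euclidean_space set" and \<nu> \<mu> :: "nat \<Rightarrow> real"
  assumes A: "compact A" "0 \<notin> A"
    and \<nu>: "inj \<nu>" "filterlim \<nu> at_top sequentially" "\<not> summable (\<lambda>k. 1 / \<nu> k)" "range \<nu> \<subseteq> range \<mu>"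
    and f: "f \<in> L2_rad A"
  shows "L2_approximable (lebesgue_on A) (\<Union>K. H \<mu> K) f"
proof (rule L2_approximable_trans[OF L2_rad_L2_approximable_polynomial[OF A(1) f] _
      radial_polynomial_L2_approximable_H[OF A \<nu>]])
  have A_leb: "A \<in> sets lebesgue" using A(1) by (simp add: lmeasurable_compact fmeasurableD)
  show "f \<in> borel_measurable (lebesgue_on A)" using f by (simp add: L2_rad_def L2_on_def)
  show "radial_polynomial \<subseteq> borel_measurable (lebesgue_on A)"
    using radial_polynomial_subset measurable_subspace_radial_continuous[OF A_leb]
    by (auto simp: measurable_subspace_def)
  show "(\<Union>K. H \<mu> K) \<subseteq> borel_measurable (lebesgue_on A)"
    using measurable_subspace_Union_H[OF A_leb] by (simp add: measurable_subspace_def)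
qed

lemma L2_dist_less_if_L2_approximable:
  assumes "L2_approximable (lebesgue_on A) S f" "0 < e"
  obtains g where "g \<in> S" "L2_dist A f g < e"
proof -
  obtain g where "g \<in> S" and small: "(\<integral>x. (f x - g x)\<^sup>2 \<partial>lebesgue_on A) < e\<^sup>2"
    using assms unfolding L2_approximable_def by (meson zero_less_power)
  from small have "sqrt (\<integral>x. (f x - g x)\<^sup>2 \<partial>lebesgue_on A) < sqrt (e\<^sup>2)" by (rule real_sqrt_less_mono)
  then show ?thesis using that \<open>g \<in> S\<close> \<open>0 < e\<close> by (simp add: L2_dist_def)
qed

lemma compact_annulus: "compact (annulus a b :: 'a::euclidean_space set)"
proof -
  have "closed (annulus a b :: 'a set)"
    unfolding annulus_def Collect_conj_eq by (intro closed_Int closed_Collect_le continuous_intros)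
  moreover have "annulus a b \<subseteq> (cball 0 b :: 'a set)" by (auto simp: annulus_def)
  ultimately show ?thesis using bounded_cball bounded_subset compact_eq_bounded_closed by blast
qed

theorem mainTheorem7:
  fixes a b :: real
    and \<mu>p \<mu>m \<mu> :: "nat \<Rightarrow> real"
  assumes ab: "0 < a" "a < b"
    and pos_inj: "inj \<mu>p" and pos: "\<And>k. \<mu>p k > 0"
    and pos_lim: "filterlim \<mu>p at_top sequentially"
    and pos_div: "\<not> summable (\<lambda>k. 1 / \<mu>p k)"
    and neg_inj: "inj \<mu>m" and neg: "\<And>k. \<mu>m k < 0"
    and neg_lim: "filterlim \<mu>m at_bot sequentially"
    and neg_div: "\<not> summable (\<lambda>k. 1 / \<bar>\<mu>m k\<bar>)"
    and enum: "bij_betw \<mu> UNIV (range \<mu>p \<union> range \<mu>m)"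
  shows "\<forall>f \<in> (L2_rad (annulus a b :: 'a::euclidean_space set)). \<forall>\<epsilon>>0.
           \<exists>K. \<exists>g \<in> H \<mu> K. L2_dist (annulus a b) f g < \<epsilon>"
proof (intro ballI allI impI)
  fix f :: "'a \<Rightarrow> real" and \<epsilon> :: real
  assume f: "f \<in> L2_rad (annulus a b)" and "0 < \<epsilon>"
  have A: "compact (annulus a b :: 'a set)" "0 \<notin> annulus a b"
    using ab compact_annulus by (auto simp: annulus_def)
  have "range \<mu>p \<subseteq> range \<mu>" using enum by (auto simp: bij_betw_def)
  from L2_rad_L2_approximable_H[OF A pos_inj pos_lim pos_div this f] \<open>0 < \<epsilon>\<close>
  obtain g where "g \<in> (\<Union>K. H \<mu> K)" "L2_dist (annulus a b) f g < \<epsilon>"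
    by (rule L2_dist_less_if_L2_approximable)
  then show "\<exists>K. \<exists>g\<in>H \<mu> K. L2_dist (annulus a b) f g < \<epsilon>" by blast
qed

end
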